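(* Let $x_{k+1}=A_kx_k+b_ku_k$, $y_k=c_kx_k$ ($k\in\mathbb{Z}$) be a completely controllable discrete-time system with $A_k\in\mathbb{R}^{n\times n}$, $b_k\in\mathbb{R}^{n\times1}$, $c_k\in\mathbb{R}^{1\times n}$. For $k\in\mathbb{Z}$ let $W_k=[\,b_k,\ A_kb_{k-1},\ A_kA_{k-1}b_{k-2},\ \dots,\ A_k\cdots A_{k-n+2}b_{k-n+1}\,]$ and define scalars by $(\alpha_{k,1},\alpha_{k-1,2},\dots,\alpha_{k-n+1,n})^T=W_k^{-1}A_kW_{k-1}(0,\dots,0,1)^T$. Then the system is algebraically equivalent to a system $(\tilde A_k,\tilde b_k,\tilde c_k)_{k\in\mathbb{Z}}$ where $\tilde b_k=(0,\dots,0,1)^T$ and $\tilde A_k$ is the matrix with ones on the superdiagonal (entries $(i,i+1)$, $1\le i\le n-1$), zeros elsewhere in the first $n-1$ rows, and last row $(\alpha_{k,1},\alpha_{k,2},\dots,\alpha_{k,n})$.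
   Context: Complete controllability: for every $k\in\mathbb{Z}$ and every $\xi_s,\xi_f\in\mathbb{R}^n$ there are controls $u_k,\dots,u_{k+n-1}$ with $x_k=\xi_s\Rightarrow x_{k+n}=\xi_f$ (for such systems every $W_k$ is invertible). Two systems $(A_k,b_k,c_k)$ and $(\tilde A_k,\tilde b_k,\tilde c_k)$ are algebraically equivalent if there are invertible $T_k$ ($k\in\mathbb{Z}$) with $\tilde A_k=T_{k+1}A_kT_k^{-1}$, $\tilde b_k=T_{k+1}b_k$, $\tilde c_k=c_kT_k^{-1}$. *)

theory Defs
  imports "Jordan_Normal_Form.Matrix"
begin

text \<open>Matrices/vectors are Jordan_Normal_Form matrices
  (indices 0..n-1); the row vector c k is represented by the vector of its entries.\<close>

definition well_dim :: "nat \<Rightarrow> (int \<Rightarrow> real mat) \<Rightarrow> (int \<Rightarrow> real vec) \<Rightarrow> (int \<Rightarrow> real vec) \<Rightarrow> bool" where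
  "well_dim n A b c \<longleftrightarrow> (\<forall>k. A k \<in> carrier_mat n n \<and> b k \<in> carrier_vec n \<and> c k \<in> carrier_vec n)"

fun traj :: "(int \<Rightarrow> real mat) \<Rightarrow> (int \<Rightarrow> real vec) \<Rightarrow> (int \<Rightarrow> real) \<Rightarrow> int \<Rightarrow> real vec \<Rightarrow> nat \<Rightarrow> real vec" where
  "traj A b u k xi 0 = xi"
| "traj A b u k xi (Suc j) = A (k + int j) *\<^sub>v traj A b u k xi j + u (k + int j) \<cdot>\<^sub>v b (k + int j)"

definition completely_controllable :: "nat \<Rightarrow> (int \<Rightarrow> real mat) \<Rightarrow> (int \<Rightarrow> real vec) \<Rightarrow> bool" where
  "completely_controllable n A b \<longleftrightarrow>
     (\<forall>k. \<forall>xs \<in> carrier_vec n. \<forall>xf \<in> carrier_vec n. \<exists>u. traj A b u k xs n = xf)"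

definition matinv :: "nat \<Rightarrow> real mat \<Rightarrow> real mat" where
  "matinv n M = (SOME N. N \<in> carrier_mat n n \<and> M * N = 1\<^sub>m n \<and> N * M = 1\<^sub>m n)"

definition alg_equiv :: "nat \<Rightarrow> (int \<Rightarrow> real mat) \<Rightarrow> (int \<Rightarrow> real vec) \<Rightarrow> (int \<Rightarrow> real vec)
    \<Rightarrow> (int \<Rightarrow> real mat) \<Rightarrow> (int \<Rightarrow> real vec) \<Rightarrow> (int \<Rightarrow> real vec) \<Rightarrow> bool" where
  "alg_equiv n A b c At bt ct \<longleftrightarrow>
     (\<exists>T :: int \<Rightarrow> real mat. \<forall>k. T k \<in> carrier_mat n n \<and> invertible_mat (T k)
        \<and> At k = T (k + 1) * A k * matinv n (T k)
        \<and> bt k = T (k + 1) *\<^sub>v b k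
        \<and> ct k = transpose_mat (matinv n (T k)) *\<^sub>v c k)"

text \<open>prodA A n k j = A k * A (k-1) * ... * A (k-j+1)  (identity for j = 0).\<close>
fun prodA :: "(int \<Rightarrow> real mat) \<Rightarrow> nat \<Rightarrow> int \<Rightarrow> nat \<Rightarrow> real mat" where
  "prodA A n k 0 = 1\<^sub>m n"
| "prodA A n k (Suc j) = prodA A n k j * A (k - int j)"

text \<open>W k = [b k, A k b (k-1), ..., A k ... A (k-n+2) b (k-n+1)]; column j (0-based).\<close>
definition Wmat :: "nat \<Rightarrow> (int \<Rightarrow> real mat) \<Rightarrow> (int \<Rightarrow> real vec) \<Rightarrow> int \<Rightarrow> real mat" where
  "Wmat n A b k = mat n n (\<lambda>(i, j). (prodA A n k j *\<^sub>v b (k - int j)) $ i)"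

text \<open>alpha_vec k = W_k^{-1} A_k W_{k-1} e_n = (alpha(k,1), alpha(k-1,2), ..., alpha(k-n+1,n)).
  Hence alpha(m, i) (1-based i) is entry i-1 of alpha_vec (m + i - 1).\<close>
definition alpha_vec :: "nat \<Rightarrow> (int \<Rightarrow> real mat) \<Rightarrow> (int \<Rightarrow> real vec) \<Rightarrow> int \<Rightarrow> real vec" where
  "alpha_vec n A b k = matinv n (Wmat n A b k) * A k * Wmat n A b (k - 1) *\<^sub>v unit_vec n (n - 1)"

definition alpha :: "nat \<Rightarrow> (int \<Rightarrow> real mat) \<Rightarrow> (int \<Rightarrow> real vec) \<Rightarrow> int \<Rightarrow> nat \<Rightarrow> real" where
  "alpha n A b m i = alpha_vec n A b (m + int i - 1) $ (i - 1)"

end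

theory Submission
  imports Defs "Jordan_Normal_Form.Determinant"
begin

(* Complete controllability makes every W_k invertible, because the states reachable at time k+1
   from the zero state at time k-n+1 are exactly W_k applied to the (reversed) controls.
   As A_k maps column j of W_(k-1) to column j+1 of W_k, the coordinates W_(k-1)^-1 x turn the
   system into one with column companion matrices C_k (last column alpha_vec k) and input e_1.
   For that system the observability matrix R_k of the output e_n^T, with rows
   e_n^T C_(k+i-1) ... C_k, is unit anti-triangular, hence invertible; it maps e_1 to e_n and
   satisfies R_(k+1) C_k = A~_k R_k: the first n-1 rows by construction and the last one by a
   time-varying Cayley-Hamilton identity, obtained by unrolling the companion recursion.
   So R_k W_(k-1)^-1 is the required equivalence. *)

lemma mult_mat_vec_index_sum:
  fixes M :: "'a :: semiring_0 mat"
  assumes "M \<in> carrier_mat n m" "v \<in> carrier_vec m" "i < n"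
  shows "(M *\<^sub>v v) $ i = (\<Sum>j<m. M $$ (i, j) * v $ j)"
  using assms by (simp add: scalar_prod_def lessThan_atLeast0)

lemma mult_mat_index_sum:
  fixes X :: "'a :: semiring_0 mat"
  assumes "X \<in> carrier_mat n m" "Y \<in> carrier_mat m p" "i < n" "j < p"
  shows "(X * Y) $$ (i, j) = (\<Sum>r<m. X $$ (i, r) * Y $$ (r, j))"
  using assms by (simp add: scalar_prod_def lessThan_atLeast0)

lemma mult_mat_vec_unit_vec:
  fixes M :: "'a :: semiring_1 mat"
  assumes "M \<in> carrier_mat n m" "j < m"
  shows "M *\<^sub>v unit_vec m j = col M j"
  using assms by (intro eq_vecI) auto

lemma index_mult_mat_vec_unit_vec:
  fixes M :: "'a :: semiring_1 mat"
  assumes "M \<in> carrier_mat n m" "i < n" "j < m"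
  shows "(M *\<^sub>v unit_vec m j) $ i = M $$ (i, j)"
  using assms by simp

lemma invertible_mat_if_right_inverse:
  fixes M :: "'a :: field mat"
  assumes M: "M \<in> carrier_mat n n" and N: "N \<in> carrier_mat n n" and MN: "M * N = 1\<^sub>m n"
  shows "invertible_mat M"
proof -
  have "N * M = 1\<^sub>m n" by (rule mat_mult_left_right_inverse[OF M N MN])
  then show ?thesis using M N MN unfolding invertible_mat_def inverts_mat_def square_mat.simps
    by (intro conjI exI[of _ N]) auto
qed

lemma invertible_mat_if_surj:
  fixes M :: "'a :: field mat"
  assumes M: "M \<in> carrier_mat n n"
    and surj: "\<And>y. y \<in> carrier_vec n \<Longrightarrow> \<exists>x \<in> carrier_vec n. M *\<^sub>v x = y"
  shows "invertible_mat M"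
proof -
  obtain x where x: "\<And>j. x j \<in> carrier_vec n \<and> M *\<^sub>v x j = unit_vec n j"
    using surj[OF unit_vec_carrier] by metis
  define N where "N = mat n n (\<lambda>(i, j). x j $ i)"
  have N: "N \<in> carrier_mat n n" by (simp add: N_def)
  have "M * N = 1\<^sub>m n"
  proof (rule mat_col_eqI)
    fix j assume "j < dim_col (1\<^sub>m n)"
    then have j: "j < n" by simp
    have "col N j = x j" using x[of j] j by (intro eq_vecI) (auto simp: N_def)
    then have "col (M * N) j = M *\<^sub>v x j" using col_mult2[OF M N j] by simp
    then show "col (M * N) j = col (1\<^sub>m n) j" using x[of j] j by simp
  qed (use M N in auto)
  then show ?thesis by (rule invertible_mat_if_right_inverse[OF M N])
qed

lemma invertible_mat_if_kernel_trivial: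
  fixes M :: "'a :: field mat"
  assumes M: "M \<in> carrier_mat n n"
    and ker: "\<And>v. v \<in> carrier_vec n \<Longrightarrow> M *\<^sub>v v = 0\<^sub>v n \<Longrightarrow> v = 0\<^sub>v n"
  shows "invertible_mat M"
proof -
  have "det M \<noteq> 0" using det_0_iff_vec_prod_zero_field[OF M] ker by blast
  from det_non_zero_imp_unit[OF M this, of "()"]
  obtain N where N: "N \<in> carrier_mat n n" "M * N = 1\<^sub>m n"
    unfolding Units_def ring_mat_def by auto
  show ?thesis by (rule invertible_mat_if_right_inverse[OF M N])
qed

lemma invertible_mat_if_anti_unitriangular:
  fixes R :: "'a :: field mat"
  assumes R: "R \<in> carrier_mat n n"
    and anti: "\<And>i j. i + j < n \<Longrightarrow> R $$ (i, j) = (if i + j = n - 1 then 1 else 0)"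
  shows "invertible_mat R"
proof (rule invertible_mat_if_kernel_trivial[OF R])
  fix v assume v: "v \<in> carrier_vec n" and Rv: "R *\<^sub>v v = 0\<^sub>v n"
  have "v $ j = 0" if "j < n" for j
    using that
  proof (induction "n - j" arbitrary: j rule: less_induct)
    case less
    let ?i = "n - 1 - j"
    have "0 = (R *\<^sub>v v) $ ?i" using Rv less.prems by simp
    also have "\<dots> = (\<Sum>j'<n. R $$ (?i, j') * v $ j')"
      using less.prems by (intro mult_mat_vec_index_sum[OF R v]) simp
    also have "\<dots> = (\<Sum>j'<n. if j' = j then v $ j' else 0)"
    proof (rule sum.cong[OF refl])
      fix j' assume j': "j' \<in> {..<n}"
      show "R $$ (?i, j') * v $ j' = (if j' = j then v $ j' else 0)"
      proof (cases "j' \<le> j")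
        case True
        then show ?thesis using anti[of ?i j'] less.prems by auto
      next
        case False
        then show ?thesis using less.hyps[of j'] j' by auto
      qed
    qed
    also have "\<dots> = v $ j" using less.prems by simp
    finally show ?case by simp
  qed
  then show "v = 0\<^sub>v n" using v by (intro eq_vecI) auto
qed

lemma matinv_inverse:
  assumes M: "M \<in> carrier_mat n n" and inv: "invertible_mat M"
  shows "matinv n M \<in> carrier_mat n n" "M * matinv n M = 1\<^sub>m n" "matinv n M * M = 1\<^sub>m n"
proof -
  from inv obtain N where MN: "M * N = 1\<^sub>m (dim_row M)" and NM: "N * M = 1\<^sub>m (dim_row N)"
    unfolding invertible_mat_def inverts_mat_def by auto
  have "dim_col N = n" using arg_cong[OF MN, of dim_col] M by simp
  moreover have "dim_row N = n" using arg_cong[OF NM, of dim_col] M by simp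
  ultimately have "N \<in> carrier_mat n n \<and> M * N = 1\<^sub>m n \<and> N * M = 1\<^sub>m n"
    using MN NM M by auto
  then have "matinv n M \<in> carrier_mat n n \<and> M * matinv n M = 1\<^sub>m n \<and> matinv n M * M = 1\<^sub>m n"
    unfolding matinv_def by (rule someI)
  then show "matinv n M \<in> carrier_mat n n" "M * matinv n M = 1\<^sub>m n" "matinv n M * M = 1\<^sub>m n"
    by auto
qed

lemma matinv_eqI:
  assumes M: "M \<in> carrier_mat n n" and N: "N \<in> carrier_mat n n" and MN: "M * N = 1\<^sub>m n"
  shows "matinv n M = N"
proof -
  note Mi = matinv_inverse[OF M invertible_mat_if_right_inverse[OF M N MN]]
  have "matinv n M = matinv n M * (M * N)" using Mi(1) MN by simp
  also have "\<dots> = (matinv n M * M) * N" using Mi(1) M N by simp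
  also have "\<dots> = N" using Mi(3) N by simp
  finally show ?thesis .
qed

lemma invertible_matinv:
  assumes M: "M \<in> carrier_mat n n" and inv: "invertible_mat M"
  shows "invertible_mat (matinv n M)"
  using matinv_inverse[OF M inv] M by (intro invertible_mat_if_right_inverse) auto

lemma alg_equiv_intro:
  assumes A: "\<And>k. A k \<in> carrier_mat n n" and At: "\<And>k. At k \<in> carrier_mat n n"
    and T: "\<And>k. T k \<in> carrier_mat n n" and T_inv: "\<And>k. invertible_mat (T k)"
    and TA: "\<And>k. T (k + 1) * A k = At k * T k"
    and Tb: "\<And>k. T (k + 1) *\<^sub>v b k = bt k"
  shows "alg_equiv n A b c At bt (\<lambda>k. transpose_mat (matinv n (T k)) *\<^sub>v c k)"
  unfolding alg_equiv_def
proof (intro exI[of _ T] allI conjI)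
  fix k
  note Ti = matinv_inverse[OF T[of k] T_inv[of k]]
  have "T (k + 1) * A k * matinv n (T k) = At k * T k * matinv n (T k)" by (simp only: TA)
  also have "\<dots> = At k * (T k * matinv n (T k))" using At[of k] T[of k] Ti(1) by simp
  also have "\<dots> = At k" using Ti(2) At[of k] by simp
  finally show "At k = T (k + 1) * A k * matinv n (T k)" by simp
qed (use T T_inv Tb in auto)

lemma alg_equiv_trans:
  assumes dims: "well_dim n A b c"
    and eq1: "alg_equiv n A b c A1 b1 c1" and eq2: "alg_equiv n A1 b1 c1 A2 b2 c2"
  shows "alg_equiv n A b c A2 b2 c2"
proof -
  have A: "\<And>k. A k \<in> carrier_mat n n" and b: "\<And>k. b k \<in> carrier_vec n"
    and c: "\<And>k. c k \<in> carrier_vec n"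
    using dims unfolding well_dim_def by auto
  obtain T1 where T1: "\<And>k. T1 k \<in> carrier_mat n n" "\<And>k. invertible_mat (T1 k)"
    and A1: "\<And>k. A1 k = T1 (k + 1) * A k * matinv n (T1 k)"
    and b1: "\<And>k. b1 k = T1 (k + 1) *\<^sub>v b k"
    and c1: "\<And>k. c1 k = transpose_mat (matinv n (T1 k)) *\<^sub>v c k"
    using eq1 unfolding alg_equiv_def by blast
  obtain T2 where T2: "\<And>k. T2 k \<in> carrier_mat n n" "\<And>k. invertible_mat (T2 k)"
    and A2: "\<And>k. A2 k = T2 (k + 1) * A1 k * matinv n (T2 k)"
    and b2: "\<And>k. b2 k = T2 (k + 1) *\<^sub>v b1 k"
    and c2: "\<And>k. c2 k = transpose_mat (matinv n (T2 k)) *\<^sub>v c1 k"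
    using eq2 unfolding alg_equiv_def by blast
  note T1i = matinv_inverse[OF T1] and T2i = matinv_inverse[OF T2]
  define X where "X k = matinv n (T1 k) * matinv n (T2 k)" for k
  have X: "X k \<in> carrier_mat n n" for k
    unfolding X_def using T1i(1) T2i(1) by (rule mult_carrier_mat)
  have T: "T2 k * T1 k \<in> carrier_mat n n" for k
    using T2(1) T1(1) by (rule mult_carrier_mat)
  have TX: "T2 k * T1 k * X k = 1\<^sub>m n" for k
  proof -
    have "T2 k * T1 k * X k = T2 k * ((T1 k * matinv n (T1 k)) * matinv n (T2 k))"
      using T1(1) T2(1) T1i(1) T2i(1)
      by (simp add: X_def assoc_mult_mat[of _ n n _ n _ n] mult_carrier_mat[of _ n n _ n])
    also have "\<dots> = 1\<^sub>m n" using T1i(2) T2i(2) carrier_matD[OF T2i(1)] by simp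
    finally show ?thesis .
  qed
  have Ti: "matinv n (T2 k * T1 k) = X k" for k
    by (rule matinv_eqI[OF T X TX])
  show ?thesis
    unfolding alg_equiv_def
  proof (intro exI[of _ "\<lambda>k. T2 k * T1 k"] allI conjI)
    fix k
    show "T2 k * T1 k \<in> carrier_mat n n" by (rule T)
    show "invertible_mat (T2 k * T1 k)" by (rule invertible_mat_if_right_inverse[OF T X TX])
    show "A2 k = T2 (k + 1) * T1 (k + 1) * A k * matinv n (T2 k * T1 k)"
      using T1(1) T2(1) T1i(1) T2i(1) A
      by (simp add: A1 A2 Ti X_def assoc_mult_mat[of _ n n _ n _ n] mult_carrier_mat[of _ n n _ n])
    show "b2 k = (T2 (k + 1) * T1 (k + 1)) *\<^sub>v b k"
      using T1(1) T2(1) b by (simp add: b1 b2 assoc_mult_mat_vec[of _ n n _ n])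
    show "c2 k = transpose_mat (matinv n (T2 k * T1 k)) *\<^sub>v c k"
      using T1i(1) T2i(1) c
      by (simp add: c1 c2 Ti X_def transpose_mult[of _ n n _ n] assoc_mult_mat_vec[of _ n n _ n])
  qed
qed

lemma prodA_carrier_mat:
  assumes "\<And>k. M k \<in> carrier_mat n n"
  shows "prodA M n k j \<in> carrier_mat n n"
  by (induction j) (auto intro: mult_carrier_mat[OF _ assms])

lemma prodA_Suc_left:
  assumes M: "\<And>k. M k \<in> carrier_mat n n"
  shows "prodA M n k (Suc j) = M k * prodA M n (k - 1) j"
proof (induction j)
  case 0
  then show ?case using M[of k] by simp
next
  case (Suc j)
  have "prodA M n k (Suc (Suc j)) = (M k * prodA M n (k - 1) j) * M (k - 1 - int j)"
    using Suc by (simp add: algebra_simps)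
  also have "\<dots> = M k * prodA M n (k - 1) (Suc j)"
    using assoc_mult_mat[OF M prodA_carrier_mat[of M, OF M] M] by simp
  finally show ?case .
qed

definition transition :: "nat \<Rightarrow> (int \<Rightarrow> real mat) \<Rightarrow> int \<Rightarrow> nat \<Rightarrow> real mat" where
  "transition n M k t = prodA M n (k + int t - 1) t"

lemma transition_0 [simp]: "transition n M k 0 = 1\<^sub>m n"
  by (simp add: transition_def)

lemma transition_Suc_right: "transition n M k (Suc t) = transition n M (k + 1) t * M k"
  by (simp add: transition_def algebra_simps)

lemma transition_Suc:
  assumes "\<And>k. M k \<in> carrier_mat n n"
  shows "transition n M k (Suc t) = M (k + int t) * transition n M k t"
  by (simp add: transition_def prodA_Suc_left[OF assms] algebra_simps del: prodA.simps(2))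

lemma transition_carrier_mat:
  assumes "\<And>k. M k \<in> carrier_mat n n"
  shows "transition n M k t \<in> carrier_mat n n"
  unfolding transition_def by (rule prodA_carrier_mat[OF assms])

definition obs_mat :: "nat \<Rightarrow> (int \<Rightarrow> real mat) \<Rightarrow> int \<Rightarrow> real mat" where
  "obs_mat n M k = mat n n (\<lambda>(i, j). transition n M k i $$ (n - 1, j))"

lemma obs_mat_carrier_mat [simp]: "obs_mat n M k \<in> carrier_mat n n"
  by (simp add: obs_mat_def)

lemma obs_mat_mult_index:
  assumes M: "\<And>k. M k \<in> carrier_mat n n" and i: "i < n" and j: "j < n"
  shows "(obs_mat n M (k + 1) * M k) $$ (i, j) = transition n M k (Suc i) $$ (n - 1, j)"
proof -
  have "(obs_mat n M (k + 1) * M k) $$ (i, j) = (\<Sum>r<n. obs_mat n M (k + 1) $$ (i, r) * M k $$ (r, j))"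
    by (rule mult_mat_index_sum[OF obs_mat_carrier_mat M i j])
  also have "\<dots> = (\<Sum>r<n. transition n M (k + 1) i $$ (n - 1, r) * M k $$ (r, j))"
    using i by (intro sum.cong) (auto simp: obs_mat_def)
  also have "\<dots> = (transition n M (k + 1) i * M k) $$ (n - 1, j)"
    using i j by (intro mult_mat_index_sum[symmetric, OF transition_carrier_mat[of M, OF M] M]) auto
  finally show ?thesis by (simp add: transition_Suc_right)
qed

definition col_companion :: "nat \<Rightarrow> 'a vec \<Rightarrow> 'a :: zero_neq_one mat" where
  "col_companion n a = mat n n (\<lambda>(i, j). if j + 1 < n then (if i = j + 1 then 1 else 0) else a $ i)"

definition row_companion :: "nat \<Rightarrow> 'a vec \<Rightarrow> 'a :: zero_neq_one mat" where
  "row_companion n r = mat n n (\<lambda>(i, j). if i + 1 < n then (if j = i + 1 then 1 else 0) else r $ j)"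

lemma col_companion_carrier_mat [simp]: "col_companion n a \<in> carrier_mat n n"
  by (simp add: col_companion_def)

lemma row_companion_carrier_mat [simp]: "row_companion n r \<in> carrier_mat n n"
  by (simp add: row_companion_def)

lemma col_companion_mult_unit_vec:
  fixes a :: "'a :: semiring_1 vec"
  assumes "j + 1 < n"
  shows "col_companion n a *\<^sub>v unit_vec n j = unit_vec n (j + 1)"
  using assms by (intro eq_vecI) (auto simp: mult_mat_vec_unit_vec[of _ n n] col_companion_def)

lemma col_companion_mult_unit_vec_last:
  fixes a :: "'a :: semiring_1 vec"
  assumes "a \<in> carrier_vec n" and "0 < n"
  shows "col_companion n a *\<^sub>v unit_vec n (n - 1) = a"
  using assms by (intro eq_vecI) (auto simp: mult_mat_vec_unit_vec[of _ n n] col_companion_def)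

lemma col_companion_mult_vec_index:
  fixes a v :: "'a :: semiring_1 vec"
  assumes v: "v \<in> carrier_vec n" and i: "i < n"
  shows "(col_companion n a *\<^sub>v v) $ i = (if i = 0 then 0 else v $ (i - 1)) + a $ i * v $ (n - 1)"
proof -
  have n: "{..<n} = insert (n - 1) {..<n - 1}" using i by auto
  have "(col_companion n a *\<^sub>v v) $ i = (\<Sum>j<n. col_companion n a $$ (i, j) * v $ j)"
    by (rule mult_mat_vec_index_sum[OF col_companion_carrier_mat v i])
  also have "\<dots> = (\<Sum>j<n - 1. col_companion n a $$ (i, j) * v $ j) + a $ i * v $ (n - 1)"
    using i by (simp add: n col_companion_def add.commute)
  also have "(\<Sum>j<n - 1. col_companion n a $$ (i, j) * v $ j) = (\<Sum>j<n - 1. if i = j + 1 then v $ j else 0)"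
    using i by (intro sum.cong) (auto simp: col_companion_def)
  also have "(\<Sum>j<n - 1. if i = j + 1 then v $ j else 0) = (if i = 0 then 0 else v $ (i - 1))"
    using i by (cases i) auto
  finally show ?thesis .
qed

lemma row_companion_mult_index:
  fixes r :: "'a :: semiring_1 vec"
  assumes X: "X \<in> carrier_mat n m" and i: "i < n" and j: "j < m"
  shows "(row_companion n r * X) $$ (i, j)
    = (if i + 1 < n then X $$ (i + 1, j) else (\<Sum>t<n. r $ t * X $$ (t, j)))"
proof -
  have "(row_companion n r * X) $$ (i, j) = (\<Sum>t<n. row_companion n r $$ (i, t) * X $$ (t, j))"
    by (rule mult_mat_index_sum[OF row_companion_carrier_mat X i j])
  also have "\<dots> = (if i + 1 < n then X $$ (i + 1, j) else (\<Sum>t<n. r $ t * X $$ (t, j)))"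
  proof (cases "i + 1 < n")
    case True
    then have "(\<Sum>t<n. row_companion n r $$ (i, t) * X $$ (t, j))
        = (\<Sum>t<n. if t = i + 1 then X $$ (t, j) else 0)"
      using i by (intro sum.cong) (auto simp: row_companion_def)
    then show ?thesis using True by simp
  next
    case False
    then show ?thesis using i by (simp add: row_companion_def)
  qed
  finally show ?thesis .
qed

context
  fixes n :: nat and a :: "int \<Rightarrow> real vec"
  assumes n_pos: "0 < n"
begin

abbreviation companion_transition :: "int \<Rightarrow> nat \<Rightarrow> real mat" where
  "companion_transition \<equiv> transition n (\<lambda>k. col_companion n (a k))"

lemma companion_transition_carrier_mat [simp]: "companion_transition k t \<in> carrier_mat n n"
  by (simp add: transition_carrier_mat)

lemma companion_transition_mult_vec_carrier_vec:
  "c \<in> carrier_vec n \<Longrightarrow> companion_transition k t *\<^sub>v c \<in> carrier_vec n"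
  using companion_transition_carrier_mat by (rule mult_mat_vec_carrier)

lemma companion_transition_Suc_mult_vec:
  assumes "c \<in> carrier_vec n"
  shows "companion_transition k (Suc t) *\<^sub>v c
    = col_companion n (a (k + int t)) *\<^sub>v (companion_transition k t *\<^sub>v c)"
  using assms by (simp add: transition_Suc assoc_mult_mat_vec[of _ n n _ n])

lemma companion_transition_unit_vec:
  "j + t < n \<Longrightarrow> companion_transition k t *\<^sub>v unit_vec n j = unit_vec n (j + t)"
proof (induction t)
  case (Suc t)
  then show ?case
    by (simp add: companion_transition_Suc_mult_vec col_companion_mult_unit_vec)
qed simp

(* Unroll z(t+1)_i = z(t)_(i-1) + a(k+t)_i z(t)_(n-1) for z(t) = C(k+t-1) \<dots> C(k) c, i steps back. *)
lemma companion_transition_index: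
  assumes c: "c \<in> carrier_vec n"
  shows "i < l \<Longrightarrow> i < n \<Longrightarrow> (companion_transition k l *\<^sub>v c) $ i
    = (\<Sum>d\<le>i. a (k + int (l - Suc d)) $ (i - d) * (companion_transition k (l - Suc d) *\<^sub>v c) $ (n - 1))"
proof (induction i arbitrary: l)
  case 0
  then obtain l' where "l = Suc l'" by (cases l) auto
  then show ?case
    using c n_pos companion_transition_mult_vec_carrier_vec[OF c]
    by (simp add: companion_transition_Suc_mult_vec col_companion_mult_vec_index)
next
  case (Suc i)
  then obtain l' where l: "l = Suc l'" and i: "i < l'" by (cases l) auto
  let ?z = "\<lambda>t. companion_transition k t *\<^sub>v c"
  have "(?z l) $ Suc i = (?z l') $ i + a (k + int l') $ Suc i * (?z l') $ (n - 1)"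
    using l Suc.prems c companion_transition_mult_vec_carrier_vec[OF c]
    by (simp add: companion_transition_Suc_mult_vec col_companion_mult_vec_index)
  also have "(?z l') $ i = (\<Sum>d\<le>i. a (k + int (l' - Suc d)) $ (i - d) * (?z (l' - Suc d)) $ (n - 1))"
    using Suc.IH i Suc.prems by simp
  finally show ?case
    using l by (simp add: sum.atMost_Suc_shift del: sum.atMost_Suc)
qed

lemma companion_transition_last_row:
  assumes c: "c \<in> carrier_vec n"
  shows "(companion_transition k n *\<^sub>v c) $ (n - 1)
    = (\<Sum>t<n. a (k + int t) $ t * (companion_transition k t *\<^sub>v c) $ (n - 1))"
proof -
  let ?f = "\<lambda>t. a (k + int t) $ t * (companion_transition k t *\<^sub>v c) $ (n - 1)"
  have "(companion_transition k n *\<^sub>v c) $ (n - 1) = (\<Sum>d\<le>n - 1. ?f (n - Suc d))"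
    using n_pos by (simp add: companion_transition_index[OF c])
  also have "\<dots> = (\<Sum>d<n. ?f (n - Suc d))"
    using n_pos by (simp add: lessThan_Suc_atMost[symmetric])
  also have "\<dots> = (\<Sum>t<n. ?f t)" by (rule sum.nat_diff_reindex)
  finally show ?thesis .
qed

lemma companion_obs_mat_anti_unitriangular:
  assumes "i + j < n"
  shows "obs_mat n (\<lambda>k. col_companion n (a k)) k $$ (i, j) = (if i + j = n - 1 then 1 else 0)"
proof -
  have "obs_mat n (\<lambda>k. col_companion n (a k)) k $$ (i, j) = (companion_transition k i *\<^sub>v unit_vec n j) $ (n - 1)"
    using assms by (simp add: obs_mat_def index_mult_mat_vec_unit_vec[of _ n n])
  then show ?thesis using assms companion_transition_unit_vec[of j i k] by auto
qed

lemma companion_obs_mat_unit_vec: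
  "obs_mat n (\<lambda>k. col_companion n (a k)) k *\<^sub>v unit_vec n 0 = unit_vec n (n - 1)"
  using n_pos companion_obs_mat_anti_unitriangular[of _ 0 k]
  by (intro eq_vecI) (auto simp: index_mult_mat_vec_unit_vec[of _ n n] carrier_matD[OF obs_mat_carrier_mat])

lemma companion_obs_mat_intertwines:
  "obs_mat n (\<lambda>k. col_companion n (a k)) (k + 1) * col_companion n (a k)
    = row_companion n (vec n (\<lambda>j. a (k + int j) $ j)) * obs_mat n (\<lambda>k. col_companion n (a k)) k"
  (is "?R (k + 1) * _ = ?A * ?R k")
proof (rule eq_matI)
  fix i j assume "i < dim_row (?A * ?R k)" "j < dim_col (?A * ?R k)"
  then have i: "i < n" and j: "j < n" by (simp_all add: row_companion_def obs_mat_def)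
  note rhs = row_companion_mult_index[OF obs_mat_carrier_mat i j]
  have "(?R (k + 1) * col_companion n (a k)) $$ (i, j) = companion_transition k (Suc i) $$ (n - 1, j)"
    by (rule obs_mat_mult_index[of "\<lambda>k. col_companion n (a k)", OF col_companion_carrier_mat i j])
  also have "\<dots> = (?A * ?R k) $$ (i, j)"
  proof (cases "i + 1 < n")
    case True
    then have "(?A * ?R k) $$ (i, j) = ?R k $$ (i + 1, j)" using rhs by simp
    then show ?thesis using True j by (simp add: obs_mat_def)
  next
    case False
    then have "Suc i = n" using i by simp
    then have "companion_transition k (Suc i) $$ (n - 1, j)
        = (\<Sum>t<n. a (k + int t) $ t * companion_transition k t $$ (n - 1, j))"
      using companion_transition_last_row[of "unit_vec n j" k] n_pos j
      by (simp add: index_mult_mat_vec_unit_vec[of _ n n])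
    also have "\<dots> = (\<Sum>t<n. vec n (\<lambda>j. a (k + int j) $ j) $ t * ?R k $$ (t, j))"
      using j by (intro sum.cong) (auto simp: obs_mat_def)
    finally show ?thesis using False by (simp add: rhs)
  qed
  finally show "(?R (k + 1) * col_companion n (a k)) $$ (i, j) = (?A * ?R k) $$ (i, j)" .
qed (simp_all add: obs_mat_def row_companion_def col_companion_def)

lemma col_companion_alg_equiv_row_companion:
  "\<exists>ct. alg_equiv n (\<lambda>k. col_companion n (a k)) (\<lambda>k. unit_vec n 0) c
     (\<lambda>k. row_companion n (vec n (\<lambda>j. a (k + int j) $ j))) (\<lambda>k. unit_vec n (n - 1)) ct"
proof -
  let ?R = "obs_mat n (\<lambda>k. col_companion n (a k))"
  have R_inv: "invertible_mat (?R k)" for k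
    by (rule invertible_mat_if_anti_unitriangular[OF obs_mat_carrier_mat companion_obs_mat_anti_unitriangular])
  have "alg_equiv n (\<lambda>k. col_companion n (a k)) (\<lambda>k. unit_vec n 0) c
     (\<lambda>k. row_companion n (vec n (\<lambda>j. a (k + int j) $ j))) (\<lambda>k. unit_vec n (n - 1))
     (\<lambda>k. transpose_mat (matinv n (?R k)) *\<^sub>v c k)"
    by (rule alg_equiv_intro[where T = ?R])
      (simp_all add: R_inv companion_obs_mat_intertwines companion_obs_mat_unit_vec)
  then show ?thesis by blast
qed

end

context
  fixes n :: nat and A :: "int \<Rightarrow> real mat" and b :: "int \<Rightarrow> real vec"
  assumes A_carrier: "\<And>k. A k \<in> carrier_mat n n" and b_carrier: "\<And>k. b k \<in> carrier_vec n"
begin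

lemma Wmat_carrier_mat [simp]: "Wmat n A b k \<in> carrier_mat n n"
  by (simp add: Wmat_def)

lemma prodA_A_carrier_mat [simp]: "prodA A n k l \<in> carrier_mat n n"
  by (rule prodA_carrier_mat[of A, OF A_carrier])

lemma prodA_A_mult_vec_carrier_vec [simp]: "prodA A n k l *\<^sub>v b m \<in> carrier_vec n"
  using prodA_A_carrier_mat b_carrier by (rule mult_mat_vec_carrier)

lemma col_Wmat: "l < n \<Longrightarrow> col (Wmat n A b k) l = prodA A n k l *\<^sub>v b (k - int l)"
  by (intro eq_vecI) (auto simp: Wmat_def carrier_matD[OF prodA_A_carrier_mat])

lemma A_mult_prodA_mult_vec:
  "A k *\<^sub>v (prodA A n (k - 1) l *\<^sub>v b (k - 1 - int l)) = prodA A n k (Suc l) *\<^sub>v b (k - int (Suc l))"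
  using assoc_mult_mat_vec[OF A_carrier prodA_A_carrier_mat b_carrier]
  by (simp add: prodA_Suc_left[OF A_carrier] algebra_simps del: prodA.simps(2))

lemma traj_zero_carrier_vec: "traj A b u k (0\<^sub>v n) j \<in> carrier_vec n"
  by (induction j) (auto intro!: add_carrier_vec mult_mat_vec_carrier[OF A_carrier] b_carrier)

lemma traj_zero_index:
  "i < n \<Longrightarrow> traj A b u k (0\<^sub>v n) j $ i
     = (\<Sum>l<j. u (k + int j - 1 - int l) * (prodA A n (k + int j - 1) l *\<^sub>v b (k + int j - 1 - int l)) $ i)"
proof (induction j arbitrary: i)
  case (Suc j)
  let ?m = "k + int j"
  let ?x = "traj A b u k (0\<^sub>v n) j"
  let ?w = "\<lambda>m l. prodA A n m l *\<^sub>v b (m - int l)"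
  have "traj A b u k (0\<^sub>v n) (Suc j) $ i = (A ?m *\<^sub>v ?x) $ i + u ?m * b ?m $ i"
    using Suc.prems A_carrier[of ?m] b_carrier[of ?m] traj_zero_carrier_vec[of u k j] by simp
  also have "(A ?m *\<^sub>v ?x) $ i = (\<Sum>r<n. A ?m $$ (i, r) * ?x $ r)"
    by (rule mult_mat_vec_index_sum[OF A_carrier traj_zero_carrier_vec Suc.prems])
  also have "\<dots> = (\<Sum>r<n. A ?m $$ (i, r) * (\<Sum>l<j. u (?m - 1 - int l) * ?w (?m - 1) l $ r))"
    using Suc.IH by (intro sum.cong) (auto simp: algebra_simps)
  also have "\<dots> = (\<Sum>l<j. u (?m - 1 - int l) * (\<Sum>r<n. A ?m $$ (i, r) * ?w (?m - 1) l $ r))"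
    unfolding sum_distrib_left by (subst sum.swap) (simp add: mult.left_commute)
  also have "\<dots> = (\<Sum>l<j. u (?m - 1 - int l) * (A ?m *\<^sub>v ?w (?m - 1) l) $ i)"
    using b_carrier Suc.prems by (simp add: mult_mat_vec_index_sum[OF A_carrier])
  also have "\<dots> = (\<Sum>l<j. u (?m - 1 - int l) * ?w ?m (Suc l) $ i)"
    using A_mult_prodA_mult_vec[of ?m] by (simp add: algebra_simps)
  finally show ?case
    using b_carrier[of ?m]
    by (simp add: sum.lessThan_Suc_shift algebra_simps del: sum.lessThan_Suc prodA.simps(2))
qed simp

lemma traj_zero_eq_Wmat:
  "traj A b u (k - int n + 1) (0\<^sub>v n) n = Wmat n A b k *\<^sub>v vec n (\<lambda>l. u (k - int l))"
  (is "_ = _ *\<^sub>v ?x")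
proof (rule eq_vecI)
  show "dim_vec (traj A b u (k - int n + 1) (0\<^sub>v n) n) = dim_vec (Wmat n A b k *\<^sub>v ?x)"
    by (simp add: carrier_vecD[OF traj_zero_carrier_vec] Wmat_def)
  fix i assume "i < dim_vec (Wmat n A b k *\<^sub>v ?x)"
  then have i: "i < n" by (simp add: Wmat_def)
  have "(Wmat n A b k *\<^sub>v ?x) $ i = (\<Sum>l<n. Wmat n A b k $$ (i, l) * ?x $ l)"
    by (rule mult_mat_vec_index_sum[OF Wmat_carrier_mat _ i]) simp
  also have "\<dots> = (\<Sum>l<n. u (k - int l) * (prodA A n k l *\<^sub>v b (k - int l)) $ i)"
    using i by (intro sum.cong) (auto simp: Wmat_def)
  also have "\<dots> = traj A b u (k - int n + 1) (0\<^sub>v n) n $ i"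
    using traj_zero_index[OF i, of u "k - int n + 1" n] by simp
  finally show "traj A b u (k - int n + 1) (0\<^sub>v n) n $ i = (Wmat n A b k *\<^sub>v ?x) $ i" by simp
qed

lemma Wmat_invertible:
  assumes "completely_controllable n A b"
  shows "invertible_mat (Wmat n A b k)"
proof (rule invertible_mat_if_surj[OF Wmat_carrier_mat])
  fix y :: "real vec" assume "y \<in> carrier_vec n"
  then obtain u where "traj A b u (k - int n + 1) (0\<^sub>v n) n = y"
    using assms unfolding completely_controllable_def by (meson zero_carrier_vec)
  then show "\<exists>x \<in> carrier_vec n. Wmat n A b k *\<^sub>v x = y"
    by (intro bexI[of _ "vec n (\<lambda>l. u (k - int l))"]) (simp_all add: traj_zero_eq_Wmat)
qed

lemma alpha_vec_carrier_vec:
  assumes "completely_controllable n A b"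
  shows "alpha_vec n A b k \<in> carrier_vec n"
  using carrier_matD(1)[OF matinv_inverse(1)[OF Wmat_carrier_mat Wmat_invertible[OF assms]]]
  unfolding alpha_vec_def by (intro carrier_vecI) simp

lemma A_mult_Wmat:
  assumes cc: "completely_controllable n A b" and n_pos: "0 < n"
  shows "A k * Wmat n A b (k - 1) = Wmat n A b k * col_companion n (alpha_vec n A b k)"
proof -
  let ?W = "Wmat n A b" and ?C = "col_companion n (alpha_vec n A b k)"
  note Wi = matinv_inverse[OF Wmat_carrier_mat Wmat_invertible[OF cc]]
  have "A k *\<^sub>v (?W (k - 1) *\<^sub>v unit_vec n j) = ?W k *\<^sub>v (?C *\<^sub>v unit_vec n j)" if j: "j < n" for j
  proof (cases "j + 1 < n")
    case True
    have "A k *\<^sub>v (?W (k - 1) *\<^sub>v unit_vec n j) = A k *\<^sub>v (prodA A n (k - 1) j *\<^sub>v b (k - 1 - int j))"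
      using j by (simp add: mult_mat_vec_unit_vec[OF Wmat_carrier_mat] col_Wmat)
    also have "\<dots> = prodA A n k (Suc j) *\<^sub>v b (k - int (Suc j))"
      by (rule A_mult_prodA_mult_vec)
    also have "\<dots> = ?W k *\<^sub>v unit_vec n (j + 1)"
      using True by (simp add: mult_mat_vec_unit_vec[OF Wmat_carrier_mat] col_Wmat del: prodA.simps(2))
    finally show ?thesis using True by (simp add: col_companion_mult_unit_vec)
  next
    case False
    then have j: "j = n - 1" using j by simp
    let ?v = "A k *\<^sub>v (?W (k - 1) *\<^sub>v unit_vec n j)"
    have v: "?v \<in> carrier_vec n" using A_carrier by (simp add: mult_mat_vec_carrier[of _ n n])
    have "?C *\<^sub>v unit_vec n j = alpha_vec n A b k"
      unfolding j by (rule col_companion_mult_unit_vec_last[OF alpha_vec_carrier_vec[OF cc] n_pos])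
    also have "\<dots> = matinv n (?W k) *\<^sub>v ?v"
      unfolding alpha_vec_def j using Wi(1) A_carrier
      by (simp add: assoc_mult_mat_vec[of _ n n _ n] mult_carrier_mat[of _ n n _ n] mult_mat_vec_carrier[of _ n n])
    finally have "?W k *\<^sub>v (?C *\<^sub>v unit_vec n j) = (?W k * matinv n (?W k)) *\<^sub>v ?v"
      using assoc_mult_mat_vec[OF Wmat_carrier_mat Wi(1) v] by simp
    then show ?thesis using Wi(2) v by simp
  qed
  then have "col (A k * ?W (k - 1)) j = col (?W k * ?C) j" if "j < n" for j
    using that A_carrier
    by (simp add: col_mult2[of _ n n _ n] mult_mat_vec_unit_vec[of _ n n, symmetric])
  then show ?thesis
    by (intro mat_col_eqI) (simp_all add: carrier_matD[OF A_carrier] Wmat_def col_companion_def)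
qed

lemma controllable_alg_equiv_col_companion:
  assumes n_pos: "0 < n" and cc: "completely_controllable n A b"
  shows "\<exists>ct. alg_equiv n A b c (\<lambda>k. col_companion n (alpha_vec n A b k)) (\<lambda>k. unit_vec n 0) ct"
proof -
  let ?W = "Wmat n A b" and ?C = "\<lambda>k. col_companion n (alpha_vec n A b k)"
  let ?T = "\<lambda>k. matinv n (?W (k - 1))"
  note Wi = matinv_inverse[OF Wmat_carrier_mat Wmat_invertible[OF cc]]
  have T: "?T k \<in> carrier_mat n n" "invertible_mat (?T k)" for k
    using Wi(1) invertible_matinv[OF Wmat_carrier_mat Wmat_invertible[OF cc]] by auto
  have TA: "?T (k + 1) * A k = ?C k * ?T k" for k
  proof -
    have "?T (k + 1) * A k = matinv n (?W k) * A k * (?W (k - 1) * ?T k)"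
      using Wi(2) right_mult_one_mat[OF mult_carrier_mat[OF Wi(1) A_carrier]] by simp
    also have "\<dots> = matinv n (?W k) * (A k * ?W (k - 1)) * ?T k"
      using A_carrier Wi(1)
      by (simp add: assoc_mult_mat[of _ n n _ n _ n] mult_carrier_mat[of _ n n _ n])
    also have "\<dots> = (matinv n (?W k) * ?W k) * ?C k * ?T k"
      using Wi(1) by (simp add: A_mult_Wmat[OF cc n_pos] assoc_mult_mat[of _ n n _ n _ n]
          mult_carrier_mat[of _ n n _ n])
    finally show ?thesis using Wi(3) by (simp add: carrier_matD[OF col_companion_carrier_mat])
  qed
  have Tb: "?T (k + 1) *\<^sub>v b k = unit_vec n 0" for k
  proof -
    have "b k = ?W k *\<^sub>v unit_vec n 0"
      using n_pos b_carrier by (simp add: mult_mat_vec_unit_vec[of _ n n] col_Wmat)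
    then have "?T (k + 1) *\<^sub>v b k = matinv n (?W k) *\<^sub>v (?W k *\<^sub>v unit_vec n 0)" by simp
    also have "\<dots> = (matinv n (?W k) * ?W k) *\<^sub>v unit_vec n 0"
      by (rule assoc_mult_mat_vec[symmetric, OF Wi(1) Wmat_carrier_mat unit_vec_carrier])
    finally show ?thesis using Wi(3) by simp
  qed
  have "alg_equiv n A b c ?C (\<lambda>k. unit_vec n 0) (\<lambda>k. transpose_mat (matinv n (?T k)) *\<^sub>v c k)"
    by (rule alg_equiv_intro[where A = A and T = ?T, OF A_carrier _ T TA Tb]) simp
  then show ?thesis by blast
qed

end

theorem proposition1:
  fixes n :: nat and A :: "int \<Rightarrow> real mat" and b c :: "int \<Rightarrow> real vec"
  assumes "n \<ge> 1"
    and "well_dim n A b c"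
    and "completely_controllable n A b"
  shows "\<exists>ct. alg_equiv n A b c
           (\<lambda>k. mat n n (\<lambda>(i, j). if i + 1 < n then (if j = i + 1 then 1 else 0)
                                  else alpha n A b k (j + 1)))
           (\<lambda>k. unit_vec n (n - 1))
           ct"
proof -
  have n_pos: "0 < n" using assms(1) by simp
  have A: "\<And>k. A k \<in> carrier_mat n n" and b: "\<And>k. b k \<in> carrier_vec n"
    using assms(2) unfolding well_dim_def by auto
  obtain c1 where eq1:
    "alg_equiv n A b c (\<lambda>k. col_companion n (alpha_vec n A b k)) (\<lambda>k. unit_vec n 0) c1"
    using controllable_alg_equiv_col_companion[OF A b n_pos assms(3)] by blast
  obtain c2 where eq2: "alg_equiv n (\<lambda>k. col_companion n (alpha_vec n A b k)) (\<lambda>k. unit_vec n 0) c1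
      (\<lambda>k. row_companion n (vec n (\<lambda>j. alpha_vec n A b (k + int j) $ j))) (\<lambda>k. unit_vec n (n - 1)) c2"
    using col_companion_alg_equiv_row_companion[OF n_pos] by blast
  have "row_companion n (vec n (\<lambda>j. alpha_vec n A b (k + int j) $ j))
      = mat n n (\<lambda>(i, j). if i + 1 < n then (if j = i + 1 then 1 else 0) else alpha n A b k (j + 1))"
    for k unfolding row_companion_def alpha_def by (rule cong_mat) auto
  then show ?thesis using alg_equiv_trans[OF assms(2) eq1 eq2] by auto
qed

end
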